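(* Let $\mu$ be a probability measure on $\mathbb{R}$ admitting a density with respect to Lebesgue measure. Let $N\ge 2$, $p_1,\dots,p_N\ge1$, $p=\sum_i p_i$, and let $\mathbf{C}=\mathbf{I}_p-\mathbf{K}$, where $\mathbf{K}$ is the $p\times p$ block matrix (blocks of sizes $p_i\times p_j$) with zero diagonal blocks and off-diagonal blocks $\mathbf{C}_{i,j}\in\mathbb{R}^{p_i\times p_j}$, $i\ne j$. If all entries of the off-diagonal blocks $\mathbf{C}_{i,j}$ are sampled independently at random from $\mu$, then $\mathbf{C}$ is invertible with probability $1$. *)

theory Defs
  imports "HOL-Probability.Probability" "Jordan_Normal_Form.Determinant"
begin

text \<open>Block sizes p 0, ..., p (N-1); block i occupies the indices
  block_start p i ..< block_start p (Suc i) of {0 ..< block_start p N}.\<close>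
definition block_start :: "(nat \<Rightarrow> nat) \<Rightarrow> nat \<Rightarrow> nat" where
  "block_start p i = (\<Sum>j<i. p j)"

definition offdiag_pos :: "nat \<Rightarrow> (nat \<Rightarrow> nat) \<Rightarrow> (nat \<times> nat) set" where
  "offdiag_pos N p = {(k, l). \<exists>i<N. \<exists>j<N. i \<noteq> j \<and>
      k \<in> {block_start p i ..< block_start p (Suc i)} \<and>
      l \<in> {block_start p j ..< block_start p (Suc j)}}"

definition block_K :: "nat \<Rightarrow> (nat \<Rightarrow> nat) \<Rightarrow> (nat \<times> nat \<Rightarrow> real) \<Rightarrow> real mat" where
  "block_K N p x = mat (block_start p N) (block_start p N)
      (\<lambda>(k, l). if (k, l) \<in> offdiag_pos N p then x (k, l) else 0)"

definition block_C :: "nat \<Rightarrow> (nat \<Rightarrow> nat) \<Rightarrow> (nat \<times> nat \<Rightarrow> real) \<Rightarrow> real mat" where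
  "block_C N p x = 1\<^sub>m (block_start p N) - block_K N p x"

end

theory Submission
  imports Defs
begin

text \<open>The determinant of \<open>C = I - K\<close> is a function of the off-diagonal entries that is
  affine in each entry separately (expand along the row of that entry) and equals 1 at
  \<open>K = 0\<close>. Such a nonzero multi-affine function vanishes only on a null set of any
  product of atomless measures, by induction on the number of coordinates: the two
  coefficients of the last coordinate are multi-affine in the others and one of them is
  nonzero, so almost everywhere they are not both zero; then the function has at most one
  root in the last coordinate, and Fubini applies because points are null. Measures with a
  Lebesgue density are atomless.\<close>

definition depends_only_on :: "'i set \<Rightarrow> (('i \<Rightarrow> 'a) \<Rightarrow> 'b) \<Rightarrow> bool" where
  "depends_only_on I g \<longleftrightarrow> (\<forall>x y. (\<forall>i\<in>I. x i = y i) \<longrightarrow> g x = g y)"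

definition affine_in :: "'i \<Rightarrow> (('i \<Rightarrow> 'a::comm_ring_1) \<Rightarrow> 'a) \<Rightarrow> bool" where
  "affine_in i g \<longleftrightarrow> (\<forall>x. \<exists>a b. \<forall>t. g (x(i := t)) = a + b * t)"

lemma affine_inD:
  assumes "affine_in i g"
  shows "g (x(i := t)) = g (x(i := 0)) + (g (x(i := 1)) - g (x(i := 0))) * t"
  using assms unfolding affine_in_def
  by (metis add.right_neutral mult_1_right mult_zero_right add_diff_cancel_left')

lemma affine_in_fun_upd:
  assumes "affine_in j g" "j \<noteq> i"
  shows "affine_in j (\<lambda>x. g (x(i := c)))"
  using assms unfolding affine_in_def by (metis fun_upd_twist)

lemma affine_in_diff:
  assumes "affine_in j g" "affine_in j h"
  shows "affine_in j (\<lambda>x. g x - h x)"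
  unfolding affine_in_def
proof
  fix x
  obtain a b a' b' where "\<forall>t. g (x(j := t)) = a + b * t" "\<forall>t. h (x(j := t)) = a' + b' * t"
    using assms unfolding affine_in_def by meson
  then have "\<forall>t. g (x(j := t)) - h (x(j := t)) = (a - a') + (b - b') * t"
    by (simp add: algebra_simps)
  then show "\<exists>a b. \<forall>t. g (x(j := t)) - h (x(j := t)) = a + b * t" by blast
qed

lemma depends_only_on_fun_upd:
  assumes "depends_only_on (insert i I) g"
  shows "depends_only_on I (\<lambda>x. g (x(i := c)))"
  using assms unfolding depends_only_on_def by simp

lemma depends_only_on_diff:
  assumes "depends_only_on I g" "depends_only_on I h"
  shows "depends_only_on I (\<lambda>x. g x - h x)"
  using assms unfolding depends_only_on_def by metis

lemma AE_affine_nonzero: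
  fixes a b :: real
  assumes "\<And>c. {c} \<in> null_sets M" and "a \<noteq> 0 \<or> b \<noteq> 0"
  shows "AE y in M. a + b * y \<noteq> 0"
proof (rule AE_I')
  show "{y \<in> space M. \<not> a + b * y \<noteq> 0} \<subseteq> {- a / b}"
    using assms(2) by (cases "b = 0") (auto simp: field_simps)
qed (rule assms(1))

lemma (in product_sigma_finite) AE_PiM_insertI:
  assumes "finite I" "i \<notin> I"
    and P: "{x \<in> space (PiM (insert i I) M). P x} \<in> sets (PiM (insert i I) M)"
    and AE: "AE x in PiM I M. AE y in M i. P (x(i := y))"
  shows "AE x in PiM (insert i I) M. P x"
proof -
  define Z where "Z = {x \<in> space (PiM (insert i I) M). \<not> P x}"
  have Z: "Z \<in> sets (PiM (insert i I) M)"
    unfolding Z_def using P by (simp add: sets.sets_Collect_neg)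
  have "emeasure (PiM (insert i I) M) Z = (\<integral>\<^sup>+ x. indicator Z x \<partial>PiM (insert i I) M)"
    using Z by simp
  also have "\<dots> = (\<integral>\<^sup>+ x. (\<integral>\<^sup>+ y. indicator Z (x(i := y)) \<partial>M i) \<partial>PiM I M)"
    using Z by (intro product_nn_integral_insert[OF assms(1,2)]) simp
  also have "\<dots> = (\<integral>\<^sup>+ x. 0 \<partial>PiM I M)"
    using AE by (intro nn_integral_cong_AE) (auto elim!: eventually_mono intro!: nn_integral_zero' simp: Z_def)
  finally show ?thesis
    using Z by (intro AE_I'[of Z]) (auto simp: Z_def)
qed

lemma borel_measurable_comp_fun_upd:
  assumes "g \<in> borel_measurable (PiM (insert i I) M)" "t \<in> space (M i)"
  shows "(\<lambda>x. g (x(i := t))) \<in> borel_measurable (PiM I M)"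
proof -
  have "(\<lambda>x. x(i := t)) \<in> measurable (PiM I M) (PiM (insert i I) M)"
    by (rule measurable_fun_upd[where J = I]) (use assms(2) in auto)
  then show ?thesis using assms(1) by (rule measurable_compose)
qed

lemma AE_PiM_nonzero_if_multiaffine:
  fixes M :: "'i \<Rightarrow> real measure" and g :: "('i \<Rightarrow> real) \<Rightarrow> real"
  assumes "\<And>i. sigma_finite_measure (M i)" and atomless: "\<And>i a. {a} \<in> null_sets (M i)"
    and "finite I" and "depends_only_on I g" and "\<And>i. i \<in> I \<Longrightarrow> affine_in i g"
    and "g \<in> borel_measurable (PiM I M)" and "g x\<^sub>0 \<noteq> 0"
  shows "AE x in PiM I M. g x \<noteq> 0"
  using \<open>finite I\<close> assms(4-)
proof (induction I arbitrary: g x\<^sub>0 rule: finite_induct)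
  case empty
  \<comment> \<open>\<open>PiM {} M\<close> is concentrated on \<open>\<lambda>_. undefined\<close>, not necessarily on \<open>x\<^sub>0\<close>.\<close>
  then have "g x = g x\<^sub>0" for x
    unfolding depends_only_on_def by blast
  with empty.prems(4) show ?case by (intro AE_I2) metis
next
  case (insert i I)
  interpret product_sigma_finite M
    by (simp add: product_sigma_finite_def assms(1))
  have space: "t \<in> space (M i)" for t
    using atomless[of t i] by (auto dest: sets.sets_into_space)
  define h where "h c x = g (x(i := c))" for c x
  have h_depends: "depends_only_on I (h c)" for c
    unfolding h_def using insert.prems(1) by (rule depends_only_on_fun_upd)
  have h_affine: "affine_in j (h c)" if "j \<in> I" for j c
    unfolding h_def using insert that by (intro affine_in_fun_upd) auto
  have h_measurable: "h c \<in> borel_measurable (PiM I M)" for c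
    unfolding h_def using insert.prems(3) space by (rule borel_measurable_comp_fun_upd)
  have "affine_in i g"
    using insert.prems(2) by simp
  then have g_upd: "g (x(i := t)) = h 0 x + (h 1 x - h 0 x) * t" for x t
    unfolding h_def by (rule affine_inD)
  have "h 0 x\<^sub>0 \<noteq> 0 \<or> h 1 x\<^sub>0 - h 0 x\<^sub>0 \<noteq> 0"
    using g_upd[of x\<^sub>0 "x\<^sub>0 i"] insert.prems(4) by auto
  then have "AE x in PiM I M. h 0 x \<noteq> 0 \<or> h 1 x - h 0 x \<noteq> 0"
  proof
    assume "h 0 x\<^sub>0 \<noteq> 0"
    then have "AE x in PiM I M. h 0 x \<noteq> 0"
      using h_depends h_affine h_measurable by (intro insert.IH)
    then show ?thesis by (rule eventually_mono) simp
  next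
    assume "h 1 x\<^sub>0 - h 0 x\<^sub>0 \<noteq> 0"
    then have "AE x in PiM I M. h 1 x - h 0 x \<noteq> 0"
      using h_depends h_affine h_measurable
      by (intro insert.IH depends_only_on_diff affine_in_diff borel_measurable_diff)
    then show ?thesis by (rule eventually_mono) simp
  qed
  then have "AE x in PiM I M. AE y in M i. g (x(i := y)) \<noteq> 0"
    unfolding g_upd by (rule eventually_mono) (rule AE_affine_nonzero[OF atomless])
  moreover have "{x \<in> space (PiM (insert i I) M). g x \<noteq> 0} \<in> sets (PiM (insert i I) M)"
    using insert.prems(3) by measurable
  ultimately show ?case
    using insert.hyps by (intro AE_PiM_insertI)
qed

lemma singleton_null_sets_density_lborel:
  fixes f :: "'a::euclidean_space \<Rightarrow> ennreal"
  assumes "f \<in> borel_measurable lborel"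
  shows "{a} \<in> null_sets (density lborel f)"
proof -
  have "AE x in lborel. x \<in> {a} \<longrightarrow> f x = 0"
    using AE_lborel_singleton[of a] by (rule eventually_mono) simp
  then show ?thesis
    unfolding null_sets_density_iff[OF assms] by simp
qed

lemma det_eq_row_expansion:
  fixes A B :: "'a::comm_ring_1 mat"
  assumes A: "A \<in> carrier_mat n n" and B: "B \<in> carrier_mat n n" and k: "k < n"
    and "\<And>i j. i < n \<Longrightarrow> j < n \<Longrightarrow> i \<noteq> k \<Longrightarrow> A $$ (i, j) = B $$ (i, j)"
  shows "det A = (\<Sum>j<n. A $$ (k, j) * cofactor B k j)"
proof -
  have "mat_delete A k j = mat_delete B k j" for j
    using assms by (intro eq_matI) (auto simp: mat_delete_def)
  then show ?thesis
    using laplace_expansion_row[OF A k] by (simp add: cofactor_def)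
qed

lemma det_affine_in_row:
  fixes A :: "'a::comm_ring_1 \<Rightarrow> 'a mat"
  assumes carrier: "\<And>t. A t \<in> carrier_mat n n" and k: "k < n"
    and other_rows: "\<And>t i j. i < n \<Longrightarrow> j < n \<Longrightarrow> i \<noteq> k \<Longrightarrow> A t $$ (i, j) = A 0 $$ (i, j)"
    and row: "\<And>j. j < n \<Longrightarrow> \<exists>a b. \<forall>t. A t $$ (k, j) = a + b * t"
  shows "\<exists>a b. \<forall>t. det (A t) = a + b * t"
proof -
  obtain a b where ab: "\<And>j t. j < n \<Longrightarrow> A t $$ (k, j) = a j + b j * t"
    using row by metis
  have "det (A t) = (\<Sum>j<n. (a j + b j * t) * cofactor (A 0) k j)" for t
    using det_eq_row_expansion[OF carrier carrier k other_rows] by (simp add: ab)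
  then have "det (A t) = (\<Sum>j<n. a j * cofactor (A 0) k j) + (\<Sum>j<n. b j * cofactor (A 0) k j) * t" for t
    by (simp add: algebra_simps sum.distrib sum_distrib_left sum_distrib_right)
  then show ?thesis by blast
qed

lemma borel_measurable_det:
  fixes A :: "'b \<Rightarrow> real mat"
  assumes carrier: "\<And>x. A x \<in> carrier_mat n n"
    and entries: "\<And>i j. i < n \<Longrightarrow> j < n \<Longrightarrow> (\<lambda>x. A x $$ (i, j)) \<in> borel_measurable M"
  shows "(\<lambda>x. det (A x)) \<in> borel_measurable M"
proof -
  have "(\<lambda>x. det (A x)) = (\<lambda>x. \<Sum>q | q permutes {0..<n}. signof q * (\<Prod>i = 0..<n. A x $$ (i, q i)))"
    using det_def'[OF carrier] by blast
  also have "\<dots> \<in> borel_measurable M"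
    by (intro borel_measurable_sum borel_measurable_times borel_measurable_prod
        borel_measurable_const entries) (auto simp: permutes_in_image)
  finally show ?thesis .
qed

lemma det_nonzero_imp_invertible_mat:
  fixes A :: "'a::field mat"
  assumes A: "A \<in> carrier_mat n n" and "det A \<noteq> 0"
  shows "invertible_mat A"
proof -
  have "A \<in> Units (ring_mat TYPE('a) n ())"
    by (rule det_non_zero_imp_unit[OF assms])
  then obtain B where "B \<in> carrier_mat n n" "B * A = 1\<^sub>m n" "A * B = 1\<^sub>m n"
    unfolding Units_def by (auto simp: ring_mat_simps)
  with A show ?thesis
    unfolding invertible_mat_def inverts_mat_def by auto
qed

lemma block_start_mono: "i \<le> j \<Longrightarrow> block_start p i \<le> block_start p j"
  unfolding block_start_def by (rule sum_mono2) auto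

lemma offdiag_pos_subset: "offdiag_pos N p \<subseteq> {..<block_start p N} \<times> {..<block_start p N}"
proof
  fix e assume "e \<in> offdiag_pos N p"
  then obtain i j where "i < N" "j < N"
    and e: "e \<in> {block_start p i ..< block_start p (Suc i)} \<times> {block_start p j ..< block_start p (Suc j)}"
    unfolding offdiag_pos_def by blast
  then have "block_start p (Suc i) \<le> block_start p N" "block_start p (Suc j) \<le> block_start p N"
    by (simp_all add: block_start_mono)
  with e show "e \<in> {..<block_start p N} \<times> {..<block_start p N}" by auto
qed

lemma offdiag_pos_neq:
  assumes "(k, l) \<in> offdiag_pos N p"
  shows "k \<noteq> l"
proof -
  obtain i j where "i \<noteq> j" and k: "k \<in> {block_start p i ..< block_start p (Suc i)}"
    and l: "l \<in> {block_start p j ..< block_start p (Suc j)}"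
    using assms unfolding offdiag_pos_def by blast
  then consider "Suc i \<le> j" | "Suc j \<le> i" by linarith
  then show ?thesis
  proof cases
    case 1
    then have "block_start p (Suc i) \<le> block_start p j" by (rule block_start_mono)
    with k l show ?thesis by simp
  next
    case 2
    then have "block_start p (Suc j) \<le> block_start p i" by (rule block_start_mono)
    with k l show ?thesis by simp
  qed
qed

lemma block_C_carrier: "block_C N p x \<in> carrier_mat (block_start p N) (block_start p N)"
  unfolding block_C_def block_K_def by auto

lemma block_C_index:
  "r < block_start p N \<Longrightarrow> c < block_start p N \<Longrightarrow>
    block_C N p x $$ (r, c) = (if r = c then 1 else 0) - (if (r, c) \<in> offdiag_pos N p then x (r, c) else 0)"
  unfolding block_C_def block_K_def by simp

lemma block_C_zero: "block_C N p (\<lambda>_. 0) = 1\<^sub>m (block_start p N)"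
  by (rule eq_matI) (auto simp: block_C_index block_C_carrier[THEN carrier_matD(1)]
      block_C_carrier[THEN carrier_matD(2)])

lemma depends_only_on_det_block_C: "depends_only_on (offdiag_pos N p) (\<lambda>x. det (block_C N p x))"
  unfolding depends_only_on_def block_C_def block_K_def
  by (auto intro!: arg_cong[of _ _ det] cong_mat)

lemma affine_in_det_block_C:
  assumes e: "e \<in> offdiag_pos N p"
  shows "affine_in e (\<lambda>x. det (block_C N p x))"
  unfolding affine_in_def
proof
  fix x
  obtain k l where kl: "e = (k, l)" by fastforce
  have k_bound: "k < block_start p N" and "k \<noteq> l"
    using e offdiag_pos_subset offdiag_pos_neq unfolding kl by blast+
  then show "\<exists>a b. \<forall>t. det (block_C N p (x(e := t))) = a + b * t"
  proof (intro det_affine_in_row[OF block_C_carrier])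
    fix j assume "j < block_start p N"
    show "\<exists>a b. \<forall>t. block_C N p (x(e := t)) $$ (k, j) = a + b * t"
    proof (cases "j = l")
      case True
      then have "block_C N p (x(e := t)) $$ (k, j) = 0 + (-1) * t" for t
        using e k_bound \<open>j < block_start p N\<close> \<open>k \<noteq> l\<close> by (simp add: block_C_index kl)
      then show ?thesis by blast
    next
      case False
      then have "block_C N p (x(e := t)) $$ (k, j) = block_C N p x $$ (k, j) + 0 * t" for t
        using k_bound \<open>j < block_start p N\<close> by (simp add: block_C_index kl)
      then show ?thesis by blast
    qed
  qed (auto simp: block_C_index kl)
qed

lemma borel_measurable_det_block_C:
  assumes "sets M = sets borel"
  shows "(\<lambda>x. det (block_C N p x)) \<in> borel_measurable (PiM (offdiag_pos N p) (\<lambda>_. M))"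
proof (rule borel_measurable_det[OF block_C_carrier])
  have component: "(\<lambda>x. x e) \<in> borel_measurable (PiM (offdiag_pos N p) (\<lambda>_. M))"
    if "e \<in> offdiag_pos N p" for e
    using measurable_component_singleton[OF that, of "\<lambda>_. M"]
    unfolding measurable_cong_sets[OF refl assms] .
  fix i j assume "i < block_start p N" "j < block_start p N"
  then show "(\<lambda>x. block_C N p x $$ (i, j)) \<in> borel_measurable (PiM (offdiag_pos N p) (\<lambda>_. M))"
    using component by (cases "(i, j) \<in> offdiag_pos N p") (simp_all add: block_C_index)
qed

theorem proposition4:
  fixes \<mu> :: "real measure" and N :: nat and p :: "nat \<Rightarrow> nat"
  assumes "prob_space \<mu>"
    and "\<exists>f. f \<in> borel_measurable lborel \<and> \<mu> = density lborel f"
    and "N \<ge> 2"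
    and "\<forall>i<N. p i \<ge> 1"
  shows "AE x in (\<Pi>\<^sub>M e\<in>offdiag_pos N p. \<mu>). invertible_mat (block_C N p x)"
proof -
  obtain f where f: "f \<in> borel_measurable lborel" "\<mu> = density lborel f"
    using assms(2) by blast
  have "AE x in (\<Pi>\<^sub>M e\<in>offdiag_pos N p. \<mu>). det (block_C N p x) \<noteq> 0"
  proof (rule AE_PiM_nonzero_if_multiaffine)
    show "sigma_finite_measure \<mu>"
      using assms(1) by (rule prob_space_imp_sigma_finite)
    show "{a} \<in> null_sets \<mu>" for a
      unfolding f(2) using f(1) by (rule singleton_null_sets_density_lborel)
    show "finite (offdiag_pos N p)"
      using offdiag_pos_subset by (rule finite_subset) simp
    show "(\<lambda>x. det (block_C N p x)) \<in> borel_measurable (\<Pi>\<^sub>M e\<in>offdiag_pos N p. \<mu>)"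
      using f(2) by (intro borel_measurable_det_block_C) simp
    show "det (block_C N p (\<lambda>_. 0)) \<noteq> 0"
      by (simp add: block_C_zero)
    show "depends_only_on (offdiag_pos N p) (\<lambda>x. det (block_C N p x))"
      by (rule depends_only_on_det_block_C)
    show "affine_in e (\<lambda>x. det (block_C N p x))" if "e \<in> offdiag_pos N p" for e
      using that by (rule affine_in_det_block_C)
  qed
  then show ?thesis
    by (rule eventually_mono) (rule det_nonzero_imp_invertible_mat[OF block_C_carrier])
qed

end
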